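(* Let $n\ge1$, $k\in\{1,\ldots,n\}$ and $f\in L^2([0,1]^n)$. If $x_{(k)}$ is ineffective almost everywhere for $f$, then $I(f,k)=0$.
   Context: $L^2([0,1]^n)$ is the space of square integrable real functions on $[0,1]^n$ modulo equality almost everywhere. For $\mathbf{x}\in[0,1]^n$, $x_{(1)}\le\cdots\le x_{(n)}$ are its coordinates in ascending order, with $x_{(0)}=0$, $x_{(n+1)}=1$. The influence index is $I(f,k)=-(n+1)(n+2)\int_{[0,1]^n}f(\mathbf{x})\,\big(x_{(k+1)}-2x_{(k)}+x_{(k-1)}\big)\,d\mathbf{x}$. $S_n$ is the symmetric group on $\{1,\ldots,n\}$; $[0,1]^n_\pi=\{\mathbf{x}:x_{\pi(1)}<\cdots<x_{\pi(n)}\}$; $\mathbf{e}_i$ is the $i$th standard basis vector. For $\mathbf{x}\in[0,1]^n_\pi$ and real $h$ with $\mathbf{x}+h\mathbf{e}_{\pi(k)}\in[0,1]^n_\pi$, set $\Delta_{(k),h}f(\mathbf{x})=f(\mathbf{x}+h\mathbf{e}_{\pi(k)})-f(\mathbf{x})$. The order statistic $x_{(k)}$ is ineffective almost everywhere for $f$ if $\Delta_{(k),\,y-x_{(k)}}f(\mathbf{x})=0$ for almost all $\mathbf{x}\in\bigcup_{\pi\in S_n}[0,1]^n_\pi$ and almost all $y\in\,]x_{(k-1)},x_{(k+1)}[$. *)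

theory Defs
  imports "HOL-Analysis.Analysis" "HOL-Combinatorics.Permutations"
begin

text \<open>Points of [0,1]^n are represented as functions nat => real on the index set
  {..<n} (coordinates 0,...,n-1 correspond to coordinates 1,...,n of the paper).\<close>

definition cube :: "nat \<Rightarrow> (nat \<Rightarrow> real) measure" where
  "cube n = PiM {..<n} (\<lambda>_. restrict_space lborel {0..1})"

definition ord_stat :: "nat \<Rightarrow> (nat \<Rightarrow> real) \<Rightarrow> nat \<Rightarrow> real" where
  "ord_stat n x k =
     (if k = 0 then 0 else if k = n + 1 then 1 else sort (map x [0..<n]) ! (k - 1))"

definition influence :: "nat \<Rightarrow> ((nat \<Rightarrow> real) \<Rightarrow> real) \<Rightarrow> nat \<Rightarrow> real" where
  "influence n f k = - (real (n + 1) * real (n + 2)) *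
     (\<integral>x. f x * (ord_stat n x (k + 1) - 2 * ord_stat n x k + ord_stat n x (k - 1)) \<partial>cube n)"

definition chamber :: "nat \<Rightarrow> (nat \<Rightarrow> nat) \<Rightarrow> (nat \<Rightarrow> real) set" where
  "chamber n \<pi> = {x \<in> space (cube n). \<forall>i j. i < j \<and> j < n \<longrightarrow> x (\<pi> i) < x (\<pi> j)}"

text \<open>Delta_{(k),h} f (x) = f(x + h e_{pi(k)}) - f(x), for x in the chamber of pi
  (paper index k corresponds to position k-1 here).\<close>
definition Delta :: "((nat \<Rightarrow> real) \<Rightarrow> real) \<Rightarrow> (nat \<Rightarrow> nat) \<Rightarrow> nat \<Rightarrow> real \<Rightarrow> (nat \<Rightarrow> real) \<Rightarrow> real" where
  "Delta f \<pi> k h x = f (x(\<pi> (k - 1) := x (\<pi> (k - 1)) + h)) - f x"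

text \<open>x_(k) is ineffective almost everywhere for f.  For x in the union of the
  chambers, the permutation pi with x in [0,1]^n_pi is unique.\<close>
definition ineffective_ae :: "nat \<Rightarrow> ((nat \<Rightarrow> real) \<Rightarrow> real) \<Rightarrow> nat \<Rightarrow> bool" where
  "ineffective_ae n f k \<longleftrightarrow>
     (AE x in cube n. \<forall>\<pi>. \<pi> permutes {..<n} \<and> x \<in> chamber n \<pi> \<longrightarrow>
        (AE y in lborel. y \<in> {ord_stat n x (k - 1) <..< ord_stat n x (k + 1)} \<longrightarrow>
           Delta f \<pi> k (y - ord_stat n x k) x = 0))"

end

(*
  Almost every point of the cube has pairwise distinct coordinates and so lies in exactly one
  open chamber [0,1]^n_pi, where x_(k) is the coordinate x_pi(k) and the neighbouring order
  statistics x_(k-1), x_(k+1) do not depend on it.  Integrating first along that coordinate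
  (Fubini), the slice of the chamber is the interval ]x_(k-1), x_(k+1)[, on which f is almost
  everywhere constant by ineffectiveness, while the weight x_(k+1) - 2t + x_(k-1) has mean zero
  over it.  Hence every chamber contributes nothing to I(f,k).
*)

theory Submission
  imports Defs
begin

abbreviation lborel01 :: "real measure" where
  "lborel01 \<equiv> restrict_space lborel {0..1}"

lemma integrable_mult_bounded:
  fixes f g :: "'a \<Rightarrow> real"
  assumes f: "integrable M f" and g: "g \<in> borel_measurable M"
    and bound: "\<And>x. x \<in> space M \<Longrightarrow> \<bar>g x\<bar> \<le> C"
  shows "integrable M (\<lambda>x. f x * g x)"
proof (rule Bochner_Integration.integrable_bound)
  show "integrable M (\<lambda>x. C * f x)"
    using f by simp
  show "(\<lambda>x. f x * g x) \<in> borel_measurable M"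
    using borel_measurable_integrable[OF f] g by measurable
  have "\<bar>f x * g x\<bar> \<le> \<bar>C * f x\<bar>" if "x \<in> space M" for x
  proof -
    have "\<bar>f x * g x\<bar> \<le> \<bar>f x\<bar> * C"
      using bound[OF that] by (simp add: abs_mult mult_left_mono)
    also have "\<dots> \<le> \<bar>C * f x\<bar>"
      by (simp add: abs_mult mult.commute mult_right_mono)
    finally show ?thesis .
  qed
  then show "AE x in M. norm (f x * g x) \<le> norm (C * f x)"
    by (auto intro: AE_I2)
qed

lemma integral_centered_linear_eq_0:
  fixes a b :: real
  shows "(\<integral>t. indicator {a<..<b} t * (a + b - 2 * t) \<partial>lborel) = 0"
proof (cases "a \<le> b")
  case False
  then show ?thesis by simp
next
  case True
  have "(\<integral>t. indicator {a<..<b} t * (a + b - 2 * t) \<partial>lborel) =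
      (\<integral>t. indicator {a..b} t *\<^sub>R (a + b - 2 * t) \<partial>lborel)"
  proof (rule integral_cong_AE)
    show "AE t in lborel. indicator {a<..<b} t * (a + b - 2 * t) = indicator {a..b} t *\<^sub>R (a + b - 2 * t)"
      using AE_lborel_singleton[of a] AE_lborel_singleton[of b]
      by eventually_elim (auto simp: indicator_def)
  qed simp_all
  also have "\<dots> = ((a + b) * b - b\<^sup>2) - ((a + b) * a - a\<^sup>2)"
    by (rule integral_FTC_atLeastAtMost[OF True])
      (auto intro!: continuous_intros derivative_eq_intros
        simp: has_real_derivative_iff_has_vector_derivative[symmetric])
  also have "\<dots> = 0"
    by (simp add: algebra_simps power2_eq_square)
  finally show ?thesis .
qed

lemma integral_lborel01_centered_linear_eq_0:
  assumes "a \<in> {0..1}" "b \<in> {0..1}"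
  shows "(\<integral>t. indicator {a<..<b} t * (a + b - 2 * t) \<partial>lborel01) = 0"
proof -
  have "(\<integral>t. indicator {a<..<b} t * (a + b - 2 * t) \<partial>lborel01) =
      (\<integral>t. indicator {0..1} t *\<^sub>R (indicator {a<..<b} t * (a + b - 2 * t)) \<partial>lborel)"
    by (rule integral_restrict_space) simp
  also have "\<dots> = (\<integral>t. indicator {a<..<b} t * (a + b - 2 * t) \<partial>lborel)"
    using assms by (intro Bochner_Integration.integral_cong) (auto simp: indicator_def)
  finally show ?thesis
    by (simp only: integral_centered_linear_eq_0)
qed

section \<open>Product structure of the cube\<close>

lemma sigma_finite_measure_lborel01: "sigma_finite_measure lborel01"
  by (auto intro!: sigma_finite_measure_restrict_space lborel.sigma_finite_measure_axioms)

lemma product_sigma_finite_lborel01: "product_sigma_finite (\<lambda>_::nat. lborel01)"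
  unfolding product_sigma_finite_def by (simp add: sigma_finite_measure_lborel01)

lemma space_cube: "space (cube n) = {..<n} \<rightarrow>\<^sub>E {0..1}"
  by (simp add: cube_def space_PiM)

lemma finite_measure_cube: "finite_measure (cube n)"
proof (rule finite_measureI)
  have "emeasure (cube n) (space (cube n)) = emeasure (cube n) ({..<n} \<rightarrow>\<^sub>E {0..1})"
    by (simp add: space_cube)
  also have "\<dots> = (\<Prod>i\<in>{..<n}. emeasure lborel01 {0..1})"
    unfolding cube_def
    by (rule product_sigma_finite.emeasure_PiM[OF product_sigma_finite_lborel01])
      (auto simp: sets_restrict_space_iff)
  finally show "emeasure (cube n) (space (cube n)) \<noteq> \<infinity>"
    by (simp add: emeasure_restrict_space)
qed

lemma cube_eq_PiM_insert: "j < n \<Longrightarrow> cube n = PiM (insert j ({..<n} - {j})) (\<lambda>_. lborel01)"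
  unfolding cube_def by (simp add: insert_absorb)

lemma borel_measurable_cube_component [measurable (raw)]:
  "i < n \<Longrightarrow> (\<lambda>x. x i) \<in> borel_measurable (cube n)"
proof -
  assume "i < n"
  then have "(\<lambda>x. x i) \<in> cube n \<rightarrow>\<^sub>M lborel01"
    unfolding cube_def by (intro measurable_component_singleton) auto
  moreover have "(\<lambda>t. t) \<in> lborel01 \<rightarrow>\<^sub>M borel"
    by (intro measurable_restrict_space1) simp
  ultimately show ?thesis by (rule measurable_compose)
qed

lemma measurable_cube_add_dim [measurable]:
  "j < n \<Longrightarrow> (\<lambda>(z, t). z(j := t)) \<in>
    PiM ({..<n} - {j}) (\<lambda>_. lborel01) \<Otimes>\<^sub>M lborel01 \<rightarrow>\<^sub>M PiM {..<n} (\<lambda>_. lborel01)"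
  using measurable_add_dim[of j "{..<n} - {j}" "\<lambda>_. lborel01"] by (simp add: insert_absorb)

lemma measurable_cube_fun_upd:
  assumes "x \<in> space (cube n)" "j < n"
  shows "(\<lambda>t. x(j := t)) \<in> lborel01 \<rightarrow>\<^sub>M cube n"
proof -
  let ?z = "restrict x ({..<n} - {j})"
  have "?z \<in> space (PiM ({..<n} - {j}) (\<lambda>_. lborel01))"
    using assms(1) by (auto simp: space_cube space_PiM)
  from measurable_compose[OF measurable_Pair1'[OF this] measurable_cube_add_dim[OF assms(2)]]
  have "(\<lambda>t. ?z(j := t)) \<in> lborel01 \<rightarrow>\<^sub>M cube n"
    by (simp add: cube_def)
  moreover have "?z(j := t) = x(j := t)" for t
    using assms by (auto simp: space_cube PiE_iff extensional_def)
  ultimately show ?thesis by simp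
qed

lemma integral_cube_slices:
  fixes h :: "(nat \<Rightarrow> real) \<Rightarrow> real"
  assumes "j < n" "integrable (cube n) h"
  shows "integral\<^sup>L (cube n) h =
    (\<integral>z. (\<integral>t. h (z(j := t)) \<partial>lborel01) \<partial>PiM ({..<n} - {j}) (\<lambda>_. lborel01))"
  using product_sigma_finite.product_integral_insert[OF product_sigma_finite_lborel01, of "{..<n} - {j}" j h]
    assms cube_eq_PiM_insert[OF assms(1)]
  by simp

lemma nn_integral_cube_slices:
  assumes "j < n" "g \<in> borel_measurable (cube n)"
  shows "(\<integral>\<^sup>+x. g x \<partial>cube n) =
    (\<integral>\<^sup>+z. (\<integral>\<^sup>+t. g (z(j := t)) \<partial>lborel01) \<partial>PiM ({..<n} - {j}) (\<lambda>_. lborel01))"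
proof -
  have "g \<in> borel_measurable (PiM (insert j ({..<n} - {j})) (\<lambda>_. lborel01))"
    using assms cube_eq_PiM_insert[OF assms(1)] by simp
  then show ?thesis
    using product_sigma_finite.product_nn_integral_insert[OF product_sigma_finite_lborel01, of "{..<n} - {j}" j g] cube_eq_PiM_insert[OF assms(1)] by simp
qed

lemma AE_cube_slices:
  assumes j: "j < n" and ae: "AE x in cube n. P x"
  shows "AE z in PiM ({..<n} - {j}) (\<lambda>_. lborel01). AE t in lborel01. P (z(j := t))"
proof -
  note sigma_finite_measure.borel_measurable_nn_integral[OF sigma_finite_measure_lborel01, measurable (raw)]
  let ?I = "{..<n} - {j}"
  from ae obtain N where N: "{x\<in>space (cube n). \<not> P x} \<subseteq> N" "emeasure (cube n) N = 0" "N \<in> sets (cube n)"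
    by (rule AE_E)
  have [measurable]: "N \<in> sets (PiM {..<n} (\<lambda>_. lborel01))"
    using N(3) by (simp add: cube_def)
  have "(\<integral>\<^sup>+z. (\<integral>\<^sup>+t. indicator N (z(j := t)) \<partial>lborel01) \<partial>PiM ?I (\<lambda>_. lborel01)) = 0"
    using nn_integral_cube_slices[OF j, of "indicator N"] N(2,3) by simp
  then have slices_null:
    "AE z in PiM ?I (\<lambda>_. lborel01). (\<integral>\<^sup>+t. indicator N (z(j := t)) \<partial>lborel01) = 0"
    by (subst (asm) nn_integral_0_iff_AE) (use j in measurable)
  have slice: "AE t in lborel01. P (z(j := t))"
    if z: "z \<in> space (PiM ?I (\<lambda>_. lborel01))"
      and "(\<integral>\<^sup>+t. indicator N (z(j := t)) \<partial>lborel01) = 0" for z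
  proof -
    have null: "AE t in lborel01. indicator N (z(j := t)) = (0::ennreal)"
      using that by (subst (asm) nn_integral_0_iff_AE) (use z j in measurable)
    have good: "P (z(j := t))"
      if t: "t \<in> space lborel01" "indicator N (z(j := t)) = (0::ennreal)" for t
    proof -
      have "z(j := t) \<in> space (cube n)"
        using z t(1) j by (auto simp: space_cube space_PiM PiE_def extensional_def Pi_def)
      moreover have "z(j := t) \<notin> N"
        using t(2) by (simp add: indicator_def split: if_splits)
      ultimately show ?thesis using N(1) by blast
    qed
    show ?thesis by (rule AE_mp[OF null AE_I2]) (use good in simp)
  qed
  show ?thesis by (rule AE_mp[OF slices_null AE_I2]) (use slice in simp)
qed

lemma AE_cube_component_neq:
  assumes i: "i < n" and j: "j < n" and ij: "i \<noteq> j"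
  shows "AE x in cube n. x i \<noteq> x j"
proof -
  define D where "D = {x \<in> space (cube n). x i = x j}"
  have D_sets: "D \<in> sets (cube n)"
    unfolding D_def using i j by measurable
  have slice_null: "(\<integral>\<^sup>+t. indicator D (z(j := t)) \<partial>lborel01) = 0"
    if z: "z \<in> space (PiM ({..<n} - {j}) (\<lambda>_. lborel01))" for z
  proof -
    have zi: "z i \<in> {0..1}"
      using z i ij by (auto simp: space_PiM PiE_def Pi_def)
    have slice_eq: "indicator D (z(j := t)) = (indicator {z i} t :: ennreal)" if "t \<in> space lborel01" for t
    proof -
      have "z(j := t) \<in> space (cube n)"
        using z that j by (auto simp: space_cube space_PiM PiE_def extensional_def Pi_def)
      then show ?thesis using ij by (auto simp: D_def indicator_def)
    qed
    have "(\<integral>\<^sup>+t. indicator D (z(j := t)) \<partial>lborel01) = (\<integral>\<^sup>+t. indicator {z i} t \<partial>lborel01)"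
      by (rule nn_integral_cong) (rule slice_eq)
    also have "\<dots> = emeasure lborel01 {z i}"
      by (rule nn_integral_indicator) (use zi in \<open>simp add: sets_restrict_space_iff\<close>)
    also have "\<dots> = 0"
      using zi by (simp add: emeasure_restrict_space)
    finally show ?thesis .
  qed
  have "emeasure (cube n) D = 0"
    using nn_integral_cube_slices[OF j, of "indicator D"] D_sets
    by (simp add: slice_null cong: nn_integral_cong)
  then show ?thesis
    using D_sets by (intro AE_I[where N = D]) (auto simp: D_def)
qed

lemma AE_cube_inj_on: "AE x in cube n. inj_on x {..<n}"
proof -
  have "AE x in cube n. \<forall>i\<in>{..<n}. \<forall>j\<in>{..<n}. i \<noteq> j \<longrightarrow> x i \<noteq> x j"
    by (auto simp: AE_finite_all intro: AE_cube_component_neq)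
  then show ?thesis by (rule AE_mp) (auto intro!: AE_I2 simp: inj_on_def)
qed

section \<open>Order statistics on chambers\<close>

lemma sort_map_permutes:
  assumes p: "\<pi> permutes {..<n}" and sorted: "sorted (map (x \<circ> \<pi>) [0..<n])"
  shows "sort (map x [0..<n]) = map (x \<circ> \<pi>) [0..<n]"
proof (rule properties_for_sort)
  have "mset (map \<pi> [0..<n]) = mset [0..<n]"
    using image_mset_mset_set[OF permutes_inj_on[OF p]] permutes_image[OF p]
    by (simp add: mset_upt atLeast0LessThan)
  then show "mset (map (x \<circ> \<pi>) [0..<n]) = mset (map x [0..<n])"
    by (metis map_map mset_map)
qed (rule sorted)

lemma obtain_sorting_permutation:
  obtains \<pi> where "\<pi> permutes {..<n}" "sort (map x [0..<n]) = map (x \<circ> \<pi>) [0..<n]"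
proof -
  let ?xs = "map x [0..<n]"
  have "mset (sort ?xs) = mset ?xs" by simp
  then obtain \<pi> where \<pi>: "\<pi> permutes {..<length ?xs}" "permute_list \<pi> ?xs = sort ?xs"
    by (rule mset_eq_permutation)
  have p: "\<pi> permutes {..<n}"
    using \<pi>(1) by simp
  have "permute_list \<pi> ?xs = map (x \<circ> \<pi>) [0..<n]"
    using permutes_in_image[OF p] by (auto simp: permute_list_def)
  then show ?thesis using that p \<pi>(2) by simp
qed

lemma ord_stat_eq_sorted_permutes:
  assumes "\<pi> permutes {..<n}" "sorted (map (x \<circ> \<pi>) [0..<n])" "1 \<le> m" "m \<le> n"
  shows "ord_stat n x m = x (\<pi> (m - 1))"
  using assms by (simp add: ord_stat_def sort_map_permutes)

lemma ord_stat_in_unit_interval: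
  assumes "x \<in> space (cube n)" "m \<le> n + 1"
  shows "ord_stat n x m \<in> {0..1}"
proof -
  have unit: "x i \<in> {0..1}" if "i < n" for i
    using PiE_mem[OF assms(1)[unfolded space_cube]] that by simp
  have "sort (map x [0..<n]) ! (m - 1) \<in> {0..1}" if "1 \<le> m" "m \<le> n"
  proof -
    have "m - 1 < length (sort (map x [0..<n]))"
      using that by simp
    then have "sort (map x [0..<n]) ! (m - 1) \<in> set (map x [0..<n])"
      by (metis nth_mem set_sort)
    then show ?thesis using unit by auto
  qed
  then show ?thesis using assms(2) by (simp add: ord_stat_def)
qed

lemma chamber_iff_sorted_wrt:
  "x \<in> chamber n \<pi> \<longleftrightarrow> x \<in> space (cube n) \<and> sorted_wrt (<) (map (x \<circ> \<pi>) [0..<n])"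
  by (auto simp: chamber_def sorted_wrt_iff_nth_less)

lemma chamber_iff_Suc:
  "x \<in> chamber n \<pi> \<longleftrightarrow> x \<in> space (cube n) \<and> (\<forall>i. Suc i < n \<longrightarrow> x (\<pi> i) < x (\<pi> (Suc i)))"
  unfolding chamber_iff_sorted_wrt by (auto simp: sorted_wrt_iff_nth_Suc_transp nth_append)

lemma ord_stat_chamber:
  assumes "\<pi> permutes {..<n}" "x \<in> chamber n \<pi>" "m \<le> n + 1"
  shows "ord_stat n x m = (if m = 0 then 0 else if m = n + 1 then 1 else x (\<pi> (m - 1)))"
proof -
  have "sorted (map (x \<circ> \<pi>) [0..<n])"
    using assms(2) by (simp add: chamber_iff_sorted_wrt strict_sorted_imp_sorted)
  then show ?thesis
    using assms ord_stat_eq_sorted_permutes[OF assms(1)] by (auto simp: ord_stat_def)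
qed

lemma chamber_exists:
  assumes "x \<in> space (cube n)" "inj_on x {..<n}"
  obtains \<pi> where "\<pi> permutes {..<n}" "x \<in> chamber n \<pi>"
proof -
  obtain \<pi> where \<pi>: "\<pi> permutes {..<n}" "sort (map x [0..<n]) = map (x \<circ> \<pi>) [0..<n]"
    by (rule obtain_sorting_permutation)
  have "distinct (map x [0..<n])"
    using assms(2) by (simp add: distinct_map atLeast0LessThan)
  then have "sorted_wrt (<) (sort (map x [0..<n]))"
    by (simp add: strict_sorted_iff)
  then show ?thesis
    using that \<pi> assms(1) by (simp add: chamber_iff_sorted_wrt)
qed

lemma chamber_unique:
  assumes "\<pi> permutes {..<n}" "x \<in> chamber n \<pi>" "\<sigma> permutes {..<n}" "x \<in> chamber n \<sigma>"
  shows "\<pi> = \<sigma>"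
proof -
  have sorted: "sorted (map (x \<circ> \<tau>) [0..<n])" if "x \<in> chamber n \<tau>" for \<tau>
    using that by (simp add: chamber_iff_sorted_wrt strict_sorted_imp_sorted)
  have same_order: "map (x \<circ> \<pi>) [0..<n] = map (x \<circ> \<sigma>) [0..<n]"
    using sort_map_permutes[OF assms(1) sorted] sort_map_permutes[OF assms(3) sorted] assms by simp
  have "inj_on x {..<n}"
  proof -
    have "distinct (map (x \<circ> \<pi>) [0..<n])"
      using assms(2) by (simp add: chamber_iff_sorted_wrt strict_sorted_iff)
    then have "inj_on x (\<pi> ` {..<n})"
      by (intro inj_on_imageI) (simp add: distinct_map atLeast0LessThan)
    then show ?thesis
      by (simp add: permutes_image[OF assms(1)])
  qed
  have "\<pi> i = \<sigma> i" if "i < n" for i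
  proof -
    have "x (\<pi> i) = x (\<sigma> i)"
      using same_order that by (simp add: map_eq_conv)
    moreover have "\<pi> i \<in> {..<n}" "\<sigma> i \<in> {..<n}"
      using that permutes_in_image[OF assms(1)] permutes_in_image[OF assms(3)] by auto
    ultimately show ?thesis
      using \<open>inj_on x {..<n}\<close> by (auto dest: inj_onD)
  qed
  moreover have "\<pi> i = \<sigma> i" if "\<not> i < n" for i
    using that assms(1,3) by (simp add: permutes_def)
  ultimately show ?thesis by blast
qed

lemma ord_stat_chamber_fun_upd:
  assumes p: "\<pi> permutes {..<n}" and k: "1 \<le> k" "k \<le> n" and m: "m \<le> n + 1"
    and x: "x \<in> chamber n \<pi>" and y: "x(\<pi> (k - 1) := t) \<in> chamber n \<pi>"
  shows "ord_stat n (x(\<pi> (k - 1) := t)) m = (if m = k then t else ord_stat n x m)"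
proof (cases "m = 0 \<or> m = n + 1")
  case True
  then show ?thesis
    using k by (auto simp: ord_stat_def)
next
  case False
  then have "m - 1 = k - 1 \<longleftrightarrow> m = k"
    using k by arith
  then have "\<pi> (m - 1) = \<pi> (k - 1) \<longleftrightarrow> m = k"
    using permutes_inj[OF p] by (simp add: inj_eq)
  then show ?thesis
    using ord_stat_chamber[OF p x m] ord_stat_chamber[OF p y m] False by simp
qed

lemma chamber_fun_upd_iff_neighbours:
  assumes p: "\<pi> permutes {..<n}" and x: "x \<in> chamber n \<pi>" and m: "m < n" and t: "t \<in> {0..1}"
  shows "x(\<pi> m := t) \<in> chamber n \<pi> \<longleftrightarrow>
    (m = 0 \<or> x (\<pi> (m - 1)) < t) \<and> (Suc m = n \<or> t < x (\<pi> (Suc m)))"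
proof -
  let ?y = "x(\<pi> m := t)"
  have y: "?y (\<pi> i) = (if i = m then t else x (\<pi> i))" for i
    using permutes_inj[OF p] by (simp add: inj_eq)
  have "?y \<in> space (cube n)"
    using x t m permutes_in_image[OF p, of m] by (auto simp: chamber_def space_cube PiE_iff extensional_def)
  then have "?y \<in> chamber n \<pi> \<longleftrightarrow> (\<forall>i. Suc i < n \<longrightarrow> ?y (\<pi> i) < ?y (\<pi> (Suc i)))"
    unfolding chamber_iff_Suc by blast
  also have "\<dots> \<longleftrightarrow> (m = 0 \<or> x (\<pi> (m - 1)) < t) \<and> (Suc m = n \<or> t < x (\<pi> (Suc m)))"
  proof
    assume y_Suc: "\<forall>i. Suc i < n \<longrightarrow> ?y (\<pi> i) < ?y (\<pi> (Suc i))"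
    have "x (\<pi> (m - 1)) < t" if "m \<noteq> 0"
    proof -
      have "Suc (m - 1) = m" "m - 1 \<noteq> m"
        using that by arith+
      then show ?thesis
        using y_Suc[rule_format, of "m - 1"] m by (simp add: y del: fun_upd_apply)
    qed
    moreover have "t < x (\<pi> (Suc m))" if "Suc m \<noteq> n"
      using y_Suc[rule_format, of m] m that by (simp add: y del: fun_upd_apply)
    ultimately show "(m = 0 \<or> x (\<pi> (m - 1)) < t) \<and> (Suc m = n \<or> t < x (\<pi> (Suc m)))"
      by blast
  next
    assume "(m = 0 \<or> x (\<pi> (m - 1)) < t) \<and> (Suc m = n \<or> t < x (\<pi> (Suc m)))"
    moreover have "x (\<pi> i) < x (\<pi> (Suc i))" if "Suc i < n" for i
      using x that by (simp add: chamber_iff_Suc)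
    ultimately show "\<forall>i. Suc i < n \<longrightarrow> ?y (\<pi> i) < ?y (\<pi> (Suc i))"
      by (auto simp: y simp del: fun_upd_apply)
  qed
  finally show ?thesis .
qed

lemma chamber_fun_upd_iff:
  assumes p: "\<pi> permutes {..<n}" and k: "1 \<le> k" "k \<le> n"
    and x: "x \<in> chamber n \<pi>" and t: "t \<in> {0<..<1}"
  shows "x(\<pi> (k - 1) := t) \<in> chamber n \<pi> \<longleftrightarrow> ord_stat n x (k - 1) < t \<and> t < ord_stat n x (k + 1)"
proof -
  have "k - 1 \<le> n + 1" "k - 1 \<noteq> n + 1" "Suc (k - 1) = k"
    using k by arith+
  then have "ord_stat n x (k - 1) = (if k = 1 then 0 else x (\<pi> (k - 1 - 1)))"
    "ord_stat n x (k + 1) = (if k = n then 1 else x (\<pi> k))"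
    using ord_stat_chamber[OF p x, of "k - 1"] ord_stat_chamber[OF p x, of "k + 1"] k by auto
  moreover have "k - 1 < n"
    using k by simp
  ultimately show ?thesis
    using chamber_fun_upd_iff_neighbours[OF p x, of "k - 1" t] t k by auto
qed

section \<open>Measurability of order statistics\<close>

lemma borel_measurable_cube_permuted_component:
  "\<pi> permutes {..<n} \<Longrightarrow> u < n \<Longrightarrow> (\<lambda>x. x (\<pi> u)) \<in> borel_measurable (cube n)"
  by (rule borel_measurable_cube_component) (use permutes_in_image[of \<pi> "{..<n}" u] in simp)

lemma sets_chamber:
  assumes p: "\<pi> permutes {..<n}"
  shows "chamber n \<pi> \<in> sets (cube n)"
proof -
  have "Measurable.pred (cube n) (\<lambda>x. \<forall>u\<in>{..<n}. \<forall>v\<in>{..<n}. u < v \<longrightarrow> x (\<pi> u) < x (\<pi> v))"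
    using borel_measurable_cube_permuted_component[OF p]
    by (intro pred_intros_finite pred_intros_imp') (auto intro: borel_measurable_less)
  moreover have "chamber n \<pi> =
      {x \<in> space (cube n). \<forall>u\<in>{..<n}. \<forall>v\<in>{..<n}. u < v \<longrightarrow> x (\<pi> u) < x (\<pi> v)}"
    by (auto simp: chamber_def)
  ultimately show ?thesis by (simp only:) (rule predE)
qed

lemma pred_sorted_permuted:
  assumes p: "\<pi> permutes {..<n}"
  shows "Measurable.pred (cube n) (\<lambda>x. sorted (map (x \<circ> \<pi>) [0..<n]))"
proof -
  have "Measurable.pred (cube n) (\<lambda>x. \<forall>u\<in>{..<n}. \<forall>v\<in>{..<n}. u \<le> v \<longrightarrow> x (\<pi> u) \<le> x (\<pi> v))"
    using borel_measurable_cube_permuted_component[OF p]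
    by (intro pred_intros_finite pred_intros_imp') (auto simp: pred_def intro!: borel_measurable_le)
  then show ?thesis
    by (rule measurable_cong[THEN iffD1, rotated]) (auto simp: sorted_iff_nth_mono)
qed

text \<open>Ties make the sorting permutation of a point non-unique; averaging over all sorting
  permutations expresses the order statistic by a formula that is visibly measurable.\<close>

lemma ord_stat_eq_average_sorting_permutations:
  assumes "1 \<le> m" "m \<le> n"
  shows "ord_stat n x m =
    (\<Sum>\<pi> | \<pi> permutes {..<n}. of_bool (sorted (map (x \<circ> \<pi>) [0..<n])) * x (\<pi> (m - 1))) /
    (\<Sum>\<pi> | \<pi> permutes {..<n}. of_bool (sorted (map (x \<circ> \<pi>) [0..<n])))"
proof -
  let ?P = "{\<pi>. \<pi> permutes {..<n}}"
  let ?S = "\<lambda>\<pi>. of_bool (sorted (map (x \<circ> \<pi>) [0..<n])) :: real"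
  have "(\<Sum>\<pi>\<in>?P. ?S \<pi> * x (\<pi> (m - 1))) = (\<Sum>\<pi>\<in>?P. ?S \<pi> * ord_stat n x m)"
    using ord_stat_eq_sorted_permutes[OF _ _ assms] by (intro sum.cong) auto
  also have "\<dots> = ord_stat n x m * (\<Sum>\<pi>\<in>?P. ?S \<pi>)"
    by (simp add: sum_distrib_left mult.commute)
  finally have num: "(\<Sum>\<pi>\<in>?P. ?S \<pi> * x (\<pi> (m - 1))) = ord_stat n x m * (\<Sum>\<pi>\<in>?P. ?S \<pi>)" .
  obtain \<pi> where \<pi>: "\<pi> permutes {..<n}" "sort (map x [0..<n]) = map (x \<circ> \<pi>) [0..<n]"
    by (rule obtain_sorting_permutation)
  have "?S \<pi> = 1"
    using \<pi>(2) sorted_sort[of "map x [0..<n]"] by simp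
  moreover have "?S \<pi> \<le> (\<Sum>\<pi>\<in>?P. ?S \<pi>)"
    using \<pi>(1) by (intro member_le_sum) (auto simp: finite_permutations)
  ultimately have "(\<Sum>\<pi>\<in>?P. ?S \<pi>) \<noteq> 0"
    by linarith
  then show ?thesis
    using num by simp
qed

lemma borel_measurable_ord_stat:
  assumes "m \<le> n + 1"
  shows "(\<lambda>x. ord_stat n x m) \<in> borel_measurable (cube n)"
proof (cases "1 \<le> m \<and> m \<le> n")
  case True
  have sorted_indicator: "(\<lambda>x. of_bool (sorted (map (x \<circ> \<pi>) [0..<n])) :: real) \<in> borel_measurable (cube n)"
    if "\<pi> permutes {..<n}" for \<pi>
    using measurable_compose[OF pred_sorted_permuted[OF that] measurable_of_bool] by simp
  have "(\<lambda>x. (\<Sum>\<pi> | \<pi> permutes {..<n}. of_bool (sorted (map (x \<circ> \<pi>) [0..<n])) * x (\<pi> (m - 1))) /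
      (\<Sum>\<pi> | \<pi> permutes {..<n}. of_bool (sorted (map (x \<circ> \<pi>) [0..<n])))) \<in> borel_measurable (cube n)"
    using sorted_indicator borel_measurable_cube_permuted_component True
    by (intro borel_measurable_divide borel_measurable_sum borel_measurable_times) auto
  then show ?thesis
    by (simp only: ord_stat_eq_average_sorting_permutations[OF True[THEN conjunct1] True[THEN conjunct2]])
next
  case False
  with assms have "m = 0 \<or> m = n + 1" by auto
  then show ?thesis by (auto simp: ord_stat_def)
qed

section \<open>Integration chamber by chamber\<close>

definition influence_weight :: "nat \<Rightarrow> nat \<Rightarrow> (nat \<Rightarrow> real) \<Rightarrow> real" where
  "influence_weight n k x = ord_stat n x (k + 1) - 2 * ord_stat n x k + ord_stat n x (k - 1)"

lemma borel_measurable_influence_weight: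
  "k \<le> n \<Longrightarrow> influence_weight n k \<in> borel_measurable (cube n)"
  unfolding influence_weight_def[abs_def]
  by (intro borel_measurable_add borel_measurable_diff borel_measurable_times borel_measurable_const
      borel_measurable_ord_stat) auto

lemma abs_influence_weight_le:
  assumes "x \<in> space (cube n)" "k \<le> n"
  shows "\<bar>influence_weight n k x\<bar> \<le> 4"
proof -
  have unit: "ord_stat n x m \<in> {0..1}" if "m \<le> k + 1" for m
    using ord_stat_in_unit_interval[OF assms(1)] that assms(2) by simp
  have "ord_stat n x (k + 1) \<in> {0..1}" "ord_stat n x k \<in> {0..1}" "ord_stat n x (k - 1) \<in> {0..1}"
    by (rule unit; simp)+
  then show ?thesis
    by (auto simp: influence_weight_def abs_le_iff)
qed

lemma influence_weight_chamber_fun_upd: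
  assumes "\<pi> permutes {..<n}" "1 \<le> k" "k \<le> n"
    and "x \<in> chamber n \<pi>" "x(\<pi> (k - 1) := t) \<in> chamber n \<pi>"
  shows "influence_weight n k (x(\<pi> (k - 1) := t)) = ord_stat n x (k + 1) - 2 * t + ord_stat n x (k - 1)"
proof -
  have "k - 1 \<noteq> k" "k - 1 \<le> n + 1"
    using assms(2,3) by arith+
  then show ?thesis
    using ord_stat_chamber_fun_upd[OF assms(1-3) _ assms(4-5)] assms(3)
    by (simp add: influence_weight_def)
qed

lemma AE_sum_indicator_chamber:
  "AE x in cube n. (\<Sum>\<pi> | \<pi> permutes {..<n}. indicator (chamber n \<pi>) x) = (1::real)"
  using AE_cube_inj_on
proof (rule AE_mp, intro AE_I2 impI)
  fix x assume x: "x \<in> space (cube n)" and inj: "inj_on x {..<n}"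
  obtain \<pi> where \<pi>: "\<pi> permutes {..<n}" "x \<in> chamber n \<pi>"
    using chamber_exists[OF x inj] .
  have "(\<Sum>\<sigma> | \<sigma> permutes {..<n}. indicator (chamber n \<sigma>) x) = (\<Sum>\<sigma>\<in>{\<pi>}. indicator (chamber n \<sigma>) x :: real)"
    using chamber_unique[OF \<pi>] \<pi>(1)
    by (intro sum.mono_neutral_right) (auto simp: finite_permutations indicator_def)
  then show "(\<Sum>\<sigma> | \<sigma> permutes {..<n}. indicator (chamber n \<sigma>) x) = (1::real)"
    using \<pi>(2) by simp
qed

lemma integral_chamber_slice_eq_0:
  fixes f :: "(nat \<Rightarrow> real) \<Rightarrow> real"
  assumes p: "\<pi> permutes {..<n}" and k: "1 \<le> k" "k \<le> n"
    and f: "f \<in> borel_measurable (cube n)" and x: "x \<in> chamber n \<pi>"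
    and const: "AE y in lborel. y \<in> {ord_stat n x (k - 1)<..<ord_stat n x (k + 1)} \<longrightarrow>
      f (x(\<pi> (k - 1) := y)) = f x"
  shows "(\<integral>t. f (x(\<pi> (k - 1) := t)) * influence_weight n k (x(\<pi> (k - 1) := t))
      * indicator (chamber n \<pi>) (x(\<pi> (k - 1) := t)) \<partial>lborel01) = 0"
proof -
  let ?j = "\<pi> (k - 1)"
  let ?a = "ord_stat n x (k - 1)" and ?b = "ord_stat n x (k + 1)"
  let ?h = "\<lambda>y. f y * influence_weight n k y * indicator (chamber n \<pi>) y"
  let ?g = "\<lambda>t. indicator {?a<..<?b} t * (?a + ?b - 2 * t)"
  have x_space: "x \<in> space (cube n)"
    using x by (simp add: chamber_def)
  have j: "?j < n"
    using p k permutes_in_image[OF p, of "k - 1"] by simp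
  have "k - 1 \<le> n + 1" "k + 1 \<le> n + 1"
    using k by arith+
  then have ab: "?a \<in> {0..1}" "?b \<in> {0..1}"
    using ord_stat_in_unit_interval[OF x_space] by blast+
  have slice_eq: "?h (x(?j := t)) = f x * ?g t"
    if t: "t \<in> {0<..<1}" and ft: "t \<in> {?a<..<?b} \<longrightarrow> f (x(?j := t)) = f x" for t
  proof (cases "t \<in> {?a<..<?b}")
    case True
    then have "x(?j := t) \<in> chamber n \<pi>"
      using chamber_fun_upd_iff[OF p k x t] by simp
    then have "influence_weight n k (x(?j := t)) = ?a + ?b - 2 * t"
      using influence_weight_chamber_fun_upd[OF p k x] by simp
    then show ?thesis
      using True ft \<open>x(?j := t) \<in> chamber n \<pi>\<close> by simp
  next
    case False
    then have "x(?j := t) \<notin> chamber n \<pi>"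
      using chamber_fun_upd_iff[OF p k x t] by simp
    then show ?thesis
      using False by simp
  qed
  have "AE t in lborel01. ?h (x(?j := t)) = f x * ?g t"
  proof (subst AE_restrict_space_iff)
    show "AE t in lborel. t \<in> {0..1} \<longrightarrow> ?h (x(?j := t)) = f x * ?g t"
      using const AE_lborel_singleton[of 0] AE_lborel_singleton[of 1]
      by eventually_elim (intro impI slice_eq; auto)
  qed simp
  moreover have "?h \<in> borel_measurable (cube n)"
    using f borel_measurable_influence_weight[OF k(2)] sets_chamber[OF p] by measurable
  then have "(\<lambda>t. ?h (x(?j := t))) \<in> borel_measurable lborel01"
    by (rule measurable_compose[OF measurable_cube_fun_upd[OF x_space j]])
  moreover have "(\<lambda>t. f x * ?g t) \<in> borel_measurable lborel01"
    by (intro measurable_restrict_space1) measurable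
  ultimately have "(\<integral>t. ?h (x(?j := t)) \<partial>lborel01) = (\<integral>t. f x * ?g t \<partial>lborel01)"
    by (intro integral_cong_AE)
  also have "\<dots> = f x * (\<integral>t. ?g t \<partial>lborel01)"
    by simp
  finally show ?thesis
    by (simp only: integral_lborel01_centered_linear_eq_0[OF ab] mult_zero_right)
qed

lemma integral_chamber_eq_0:
  fixes f :: "(nat \<Rightarrow> real) \<Rightarrow> real"
  assumes p: "\<pi> permutes {..<n}" and k: "1 \<le> k" "k \<le> n"
    and f: "f \<in> borel_measurable (cube n)"
    and integrable: "integrable (cube n) (\<lambda>x. f x * influence_weight n k x * indicator (chamber n \<pi>) x)"
    and const: "AE x in cube n. x \<in> chamber n \<pi> \<longrightarrow>
      (AE y in lborel. y \<in> {ord_stat n x (k - 1)<..<ord_stat n x (k + 1)} \<longrightarrow>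
        f (x(\<pi> (k - 1) := y)) = f x)"
  shows "(\<integral>x. f x * influence_weight n k x * indicator (chamber n \<pi>) x \<partial>cube n) = 0"
proof -
  let ?j = "\<pi> (k - 1)"
  let ?h = "\<lambda>x. f x * influence_weight n k x * indicator (chamber n \<pi>) x"
  define P where "P x \<longleftrightarrow> (AE y in lborel. y \<in> {ord_stat n x (k - 1)<..<ord_stat n x (k + 1)} \<longrightarrow>
      f (x(?j := y)) = f x)" for x
  have j: "?j < n"
    using p k permutes_in_image[OF p, of "k - 1"] by simp
  have slice: "(\<integral>t. ?h (z(?j := t)) \<partial>lborel01) = 0"
    if slice_P: "AE t in lborel01. z(?j := t) \<in> chamber n \<pi> \<longrightarrow> P (z(?j := t))" for z
  proof (cases "\<exists>t. z(?j := t) \<in> chamber n \<pi> \<and> P (z(?j := t))")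
    case True
    then obtain t0 where x: "z(?j := t0) \<in> chamber n \<pi>" and "P (z(?j := t0))"
      by blast
    then have "(\<integral>t. ?h ((z(?j := t0))(?j := t)) \<partial>lborel01) = 0"
      using integral_chamber_slice_eq_0[OF p k f x] by (simp add: P_def)
    then show ?thesis
      by simp
  next
    case False
    with slice_P have "AE t in lborel01. z(?j := t) \<notin> chamber n \<pi>"
      by (auto elim!: AE_mp intro!: AE_I2)
    then have "AE t in lborel01. ?h (z(?j := t)) = 0"
      by (rule AE_mp) (simp add: AE_I2)
    then show ?thesis
      by (rule integral_eq_zero_AE)
  qed
  have "integral\<^sup>L (cube n) ?h =
      (\<integral>z. (\<integral>t. ?h (z(?j := t)) \<partial>lborel01) \<partial>PiM ({..<n} - {?j}) (\<lambda>_. lborel01))"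
    by (rule integral_cube_slices[OF j integrable])
  also have "\<dots> = 0"
    by (intro integral_eq_zero_AE AE_mp[OF AE_cube_slices[OF j const[folded P_def]] AE_I2] impI slice)
  finally show ?thesis .
qed

lemma ineffective_ae_chamber:
  assumes "ineffective_ae n f k" "\<pi> permutes {..<n}" "1 \<le> k" "k \<le> n"
  shows "AE x in cube n. x \<in> chamber n \<pi> \<longrightarrow>
    (AE y in lborel. y \<in> {ord_stat n x (k - 1)<..<ord_stat n x (k + 1)} \<longrightarrow>
      f (x(\<pi> (k - 1) := y)) = f x)"
proof (rule AE_mp[OF assms(1)[unfolded ineffective_ae_def] AE_I2], intro impI)
  fix x assume ineff: "\<forall>\<sigma>. \<sigma> permutes {..<n} \<and> x \<in> chamber n \<sigma> \<longrightarrow>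
    (AE y in lborel. y \<in> {ord_stat n x (k - 1)<..<ord_stat n x (k + 1)} \<longrightarrow>
      Delta f \<sigma> k (y - ord_stat n x k) x = 0)"
    and x: "x \<in> chamber n \<pi>"
  have "ord_stat n x k = x (\<pi> (k - 1))"
    using ord_stat_chamber[OF assms(2) x] assms(3,4) by simp
  moreover have "AE y in lborel. y \<in> {ord_stat n x (k - 1)<..<ord_stat n x (k + 1)} \<longrightarrow>
      Delta f \<pi> k (y - ord_stat n x k) x = 0"
    using ineff assms(2) x by blast
  ultimately show "AE y in lborel. y \<in> {ord_stat n x (k - 1)<..<ord_stat n x (k + 1)} \<longrightarrow>
      f (x(\<pi> (k - 1) := y)) = f x"
    by (simp add: Delta_def)
qed

theorem proposition12:
  fixes n k :: nat and f :: "(nat \<Rightarrow> real) \<Rightarrow> real"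
  assumes "n \<ge> 1" and "k \<in> {1..n}"
    and "f \<in> borel_measurable (cube n)"
    and "integrable (cube n) (\<lambda>x. (f x)\<^sup>2)"
    and "ineffective_ae n f k"
  shows "influence n f k = 0"
proof -
  have k: "1 \<le> k" "k \<le> n"
    using assms(2) by auto
  let ?P = "{\<pi>. \<pi> permutes {..<n}}"
  let ?h = "\<lambda>\<pi> x. f x * influence_weight n k x * indicator (chamber n \<pi>) x"
  have fw: "integrable (cube n) (\<lambda>x. f x * influence_weight n k x)"
    using finite_measure.square_integrable_imp_integrable[OF finite_measure_cube assms(3,4)] borel_measurable_influence_weight[OF k(2)]
      abs_influence_weight_le[OF _ k(2)]
    by (rule integrable_mult_bounded)
  have h: "integrable (cube n) (?h \<pi>)" if "\<pi> \<in> ?P" for \<pi>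
    using fw sets_chamber that by (intro integrable_real_mult_indicator) auto
  have "AE x in cube n. f x * influence_weight n k x = (\<Sum>\<pi>\<in>?P. ?h \<pi> x)"
    using AE_sum_indicator_chamber by (rule AE_mp) (auto intro!: AE_I2 simp: sum_distrib_left[symmetric])
  then have "(\<integral>x. f x * influence_weight n k x \<partial>cube n) = (\<integral>x. (\<Sum>\<pi>\<in>?P. ?h \<pi> x) \<partial>cube n)"
    using fw h by (intro integral_cong_AE) auto
  also have "\<dots> = (\<Sum>\<pi>\<in>?P. integral\<^sup>L (cube n) (?h \<pi>))"
    by (rule Bochner_Integration.integral_sum) (rule h)
  also have "\<dots> = 0"
    using integral_chamber_eq_0[OF _ k assms(3) h ineffective_ae_chamber[OF assms(5) _ k]] by simp
  finally show ?thesis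
    by (simp add: influence_def influence_weight_def)
qed

end
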